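(* In the setting of the context, the multiplication maps $A\otimes_kB\to C$, $a\otimes b\mapsto ab$, and $B\otimes_kA\to C$, $b\otimes a\mapsto ba$, are linear isomorphisms.
   Context: $k$ is a field; $C_R(S)=\{r\in R:rs=sr\ \forall s\in S\}$. $N\subseteq M$ is a strongly separable, irreducible extension of $k$-algebras: $C_M(N)=k1$ and there are an $N$-bimodule map $E:M\to N$ and $x_1,\dots,x_n,y_1,\dots,y_n\in M$ with $\sum_iE(mx_i)y_i=m=\sum_ix_iE(y_im)$ for all $m\in M$, $E(1)\neq0$, $\sum_ix_iy_i\neq0$; normalized so that $E(1)=1$, whence $\sum_ix_iy_i=\lambda^{-1}1$ with $0\neq\lambda\in k$. Basic construction: given $S\subseteq R$, an $S$-bimodule map $E_S:R\to S$ with $E_S(1)=1$ and $r_i,s_i\in R$ with $\sum_iE_S(rr_i)s_i=r=\sum_ir_iE_S(s_ir)$ and $\sum_ir_is_i=\lambda^{-1}1$, set $R_1=R\otimes_SR$ with product $(a\otimes b)(c\otimes d)=aE_S(bc)\otimes d$, unit $\sum_ir_i\otimes s_i$, $R\subseteq R_1$ via $r\mapsto\sum_irr_i\otimes s_i$, $e=1\otimes1$, $E_R:R_1\to R$, $a\otimes b\mapsto\lambda ab$; then $E_R$, $\lambda^{-1}r_i\otimes1$, $1\otimes s_i$ satisfy the same conditions with the same $\lambda$. From $(N\subseteq M,E)$ get $M_1,e_1,E_M$; from $(M\subseteq M_1,E_M)$ get $M_2,e_2,E_{M_1}$. Let $A=C_{M_1}(N)$, $B=C_{M_2}(M)$,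 $C=C_{M_2}(N)$ (so $A,B\subseteq C$). Depth 2 is assumed: $M_1$ is free as right $M$-module with basis in $A$, $M_2$ free as right $M_1$-module with basis in $B$. *)

theory Defs
  imports Main
begin

text \<open>All algebras of the tower N, M, M1, M2 are
realised as subalgebras (subsets) of one ambient k-algebra (M2 sits inside it).\<close>

definition k_algebra :: "('k::field \<Rightarrow> 'a::ring_1 \<Rightarrow> 'a) \<Rightarrow> bool" where
  "k_algebra sc \<longleftrightarrow>
     (\<forall>c x y. sc c (x + y) = sc c x + sc c y) \<and>
     (\<forall>c d x. sc (c + d) x = sc c x + sc d x) \<and>
     (\<forall>c d x. sc c (sc d x) = sc (c * d) x) \<and>
     (\<forall>x. sc 1 x = x) \<and>
     (\<forall>c x y. sc c (x * y) = sc c x * y \<and> sc c (x * y) = x * sc c y)"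

definition subalg :: "('k::field \<Rightarrow> 'a::ring_1 \<Rightarrow> 'a) \<Rightarrow> 'a set \<Rightarrow> bool" where
  "subalg sc X \<longleftrightarrow> 1 \<in> X \<and> (\<forall>x\<in>X. \<forall>y\<in>X. x + y \<in> X \<and> x * y \<in> X) \<and>
     (\<forall>c. \<forall>x\<in>X. sc c x \<in> X)"

definition cent :: "'a::ring_1 set \<Rightarrow> 'a set \<Rightarrow> 'a set" where
  "cent R X = {r \<in> R. \<forall>x\<in>X. r * x = x * r}"

definition scalars :: "('k::field \<Rightarrow> 'a::ring_1 \<Rightarrow> 'a) \<Rightarrow> 'a set" where
  "scalars sc = range (\<lambda>c. sc c 1)"

definition bimod_map :: "('k::field \<Rightarrow> 'a::ring_1 \<Rightarrow> 'a) \<Rightarrow> 'a set \<Rightarrow> 'a set \<Rightarrow> ('a \<Rightarrow> 'a) \<Rightarrow> bool" where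
  "bimod_map sc S R E \<longleftrightarrow>
     (\<forall>r\<in>R. E r \<in> S) \<and>
     (\<forall>r\<in>R. \<forall>r'\<in>R. E (r + r') = E r + E r') \<and>
     (\<forall>c. \<forall>r\<in>R. E (sc c r) = sc c (E r)) \<and>
     (\<forall>s\<in>S. \<forall>r\<in>R. \<forall>s'\<in>S. E (s * r * s') = s * E r * s')"

definition strongly_separable ::
  "('k::field \<Rightarrow> 'a::ring_1 \<Rightarrow> 'a) \<Rightarrow> 'a set \<Rightarrow> 'a set \<Rightarrow> ('a \<Rightarrow> 'a) \<Rightarrow> 'k \<Rightarrow>
   nat \<Rightarrow> (nat \<Rightarrow> 'a) \<Rightarrow> (nat \<Rightarrow> 'a) \<Rightarrow> bool" where
  "strongly_separable sc S R E lam n x y \<longleftrightarrow>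
     bimod_map sc S R E \<and>
     (\<forall>i<n. x i \<in> R \<and> y i \<in> R) \<and>
     (\<forall>m\<in>R. (\<Sum>i<n. E (m * x i) * y i) = m \<and> (\<Sum>i<n. x i * E (y i * m)) = m) \<and>
     E 1 = 1 \<and> lam \<noteq> 0 \<and> (\<Sum>i<n. x i * y i) = sc (inverse lam) 1"

text \<open>Tensor products, as in the standard construction: the free k-vector space on
  A \<times> B (finitely supported functions A \<times> B \<Rightarrow> k) modulo the span of the
  relations (additivity in each slot, k-homogeneity in each slot, S-balancedness).\<close>

definition fin_supp_on :: "('x \<Rightarrow> 'k::zero) \<Rightarrow> 'x set \<Rightarrow> bool" where
  "fin_supp_on f X \<longleftrightarrow> finite {p. f p \<noteq> 0} \<and> {p. f p \<noteq> 0} \<subseteq> X"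

definition ind :: "'x \<Rightarrow> 'x \<Rightarrow> 'k::zero_neq_one" where
  "ind x = (\<lambda>p. if p = x then 1 else 0)"

definition fspan :: "('x \<Rightarrow> 'k::field) set \<Rightarrow> ('x \<Rightarrow> 'k) set" where
  "fspan G = {f. \<exists>t r. finite t \<and> t \<subseteq> G \<and> f = (\<lambda>p. \<Sum>g\<in>t. r g * g p)}"

definition tensor_rels ::
  "('k::field \<Rightarrow> 'a::ring_1 \<Rightarrow> 'a) \<Rightarrow> 'a set \<Rightarrow> 'a set \<Rightarrow> 'a set \<Rightarrow> ('a \<times> 'a \<Rightarrow> 'k) set" where
  "tensor_rels sc S A B =
     {(\<lambda>p. ind (a + a', b) p - ind (a, b) p - ind (a', b) p) | a a' b. a \<in> A \<and> a' \<in> A \<and> b \<in> B}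
   \<union> {(\<lambda>p. ind (a, b + b') p - ind (a, b) p - ind (a, b') p) | a b b'. a \<in> A \<and> b \<in> B \<and> b' \<in> B}
   \<union> {(\<lambda>p. ind (sc c a, b) p - c * ind (a, b) p) | c a b. a \<in> A \<and> b \<in> B}
   \<union> {(\<lambda>p. ind (a, sc c b) p - c * ind (a, b) p) | c a b. a \<in> A \<and> b \<in> B}
   \<union> {(\<lambda>p. ind (a * s, b) p - ind (a, s * b) p) | a s b. a \<in> A \<and> s \<in> S \<and> b \<in> B}"

definition tsum :: "('k::field \<Rightarrow> 'a::ring_1 \<Rightarrow> 'a) \<Rightarrow> ('a \<Rightarrow> 'a \<Rightarrow> 'a) \<Rightarrow> ('a \<times> 'a \<Rightarrow> 'k) \<Rightarrow> 'a" where
  "tsum sc phi f = (\<Sum>p\<in>{p. f p \<noteq> 0}. sc (f p) (phi (fst p) (snd p)))"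

text \<open>The map A \<otimes>_S B \<rightarrow> C, a \<otimes> b \<mapsto> phi a b, is a well-defined k-linear isomorphism:
  the induced map on the free space lands in C, kills the relations, is onto C,
  and its kernel is exactly the span of the relations.\<close>
definition tensor_iso ::
  "('k::field \<Rightarrow> 'a::ring_1 \<Rightarrow> 'a) \<Rightarrow> 'a set \<Rightarrow> 'a set \<Rightarrow> 'a set \<Rightarrow> 'a set \<Rightarrow> ('a \<Rightarrow> 'a \<Rightarrow> 'a) \<Rightarrow> bool" where
  "tensor_iso sc S A B C phi \<longleftrightarrow>
     (\<forall>f. fin_supp_on f (A \<times> B) \<longrightarrow> tsum sc phi f \<in> C) \<and>
     (\<forall>g\<in>tensor_rels sc S A B. tsum sc phi g = 0) \<and>
     (\<forall>c\<in>C. \<exists>f. fin_supp_on f (A \<times> B) \<and> c = tsum sc phi f) \<and>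
     (\<forall>f. fin_supp_on f (A \<times> B) \<longrightarrow> tsum sc phi f = 0 \<longrightarrow> f \<in> fspan (tensor_rels sc S A B))"

text \<open>R1 (with e and E_R) realises the basic construction of (S \<subseteq> R, E_S, lambda):
  R1 is a subalgebra containing R, e \<in> R1, a \<otimes> b \<mapsto> a e b is an isomorphism
  R \<otimes>_S R \<cong> R1, the product satisfies (a e b)(c e d) = a E_S(bc) e d (encoded by
  e r e = E_S(r) e), and E_R : R1 \<rightarrow> R is k-linear with E_R(a e b) = lambda a b.
  (The unit, the embedding of R and e = 1 \<otimes> 1 then match the construction.)\<close>
definition basic_construction ::
  "('k::field \<Rightarrow> 'a::ring_1 \<Rightarrow> 'a) \<Rightarrow> 'a set \<Rightarrow> 'a set \<Rightarrow> ('a \<Rightarrow> 'a) \<Rightarrow> 'k \<Rightarrow>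
   'a \<Rightarrow> 'a set \<Rightarrow> ('a \<Rightarrow> 'a) \<Rightarrow> bool" where
  "basic_construction sc S R ES lam e R1 ER \<longleftrightarrow>
     subalg sc R1 \<and> R \<subseteq> R1 \<and> e \<in> R1 \<and>
     (\<forall>r\<in>R. e * r * e = ES r * e) \<and>
     tensor_iso sc S R R R1 (\<lambda>a b. a * e * b) \<and>
     (\<forall>z\<in>R1. ER z \<in> R) \<and>
     (\<forall>z\<in>R1. \<forall>w\<in>R1. ER (z + w) = ER z + ER w) \<and>
     (\<forall>c. \<forall>z\<in>R1. ER (sc c z) = sc c (ER z)) \<and>
     (\<forall>a\<in>R. \<forall>b\<in>R. ER (a * e * b) = sc lam (a * b))"

definition right_free_basis :: "'a::ring_1 set \<Rightarrow> 'a set \<Rightarrow> 'a set \<Rightarrow> bool" where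
  "right_free_basis S T P \<longleftrightarrow> P \<subseteq> T \<and>
     (\<forall>t\<in>T. \<exists>!f. (\<forall>p. f p \<in> S) \<and> (\<forall>p. p \<notin> P \<longrightarrow> f p = 0) \<and> finite {p. f p \<noteq> 0} \<and>
                 t = (\<Sum>p\<in>{p. f p \<noteq> 0}. p * f p))"

end

theory Submission
  imports Defs
begin

(* The basic construction of a strongly separable irreducible extension S \<subseteq> R is again
   strongly separable, with dual bases lambda^-1 x_i e and e y_i, and irreducible: C_R1(R) = k.
   Hence C_M1(M) = k.  Depth 2 gives a finite basis Q of M2 over M1 inside B, so every c in M2
   is both c = sum_q q c_q and, through the dual bases of M1 \<subseteq> M2, c = sum_q E_M1(c q) psi_q
   with psi_q in B.  For c in C the coefficients c_q and E_M1(c q) lie in A; for c in B they lie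
   in C_M1(M) = k.  So B is spanned over k by Q and by the psi_q, and C = B A = A B.  Modulo the
   tensor relations every element of A (x) B reduces to sum_q a_q (x) psi_q, and the k-linear map
   c \<mapsto> E_M1(c q) recovers a_q from its image in C, so the multiplication map is injective;
   the coordinates c \<mapsto> c_q do the same for B (x) A. *)

locale k_alg =
  fixes sc :: "'k::field \<Rightarrow> 'a::ring_1 \<Rightarrow> 'a"
  assumes k_algebra: "k_algebra sc"
begin

lemma sc_add_right: "sc c (u + v) = sc c u + sc c v"
  and sc_add_left: "sc (c + d) u = sc c u + sc d u"
  and sc_sc [simp]: "sc c (sc d u) = sc (c * d) u"
  and sc_one [simp]: "sc 1 u = u"
  and mult_sc_left [simp]: "sc c u * v = sc c (u * v)"
  and mult_sc_right [simp]: "u * sc c v = sc c (u * v)"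
  using k_algebra unfolding k_algebra_def by metis+

lemma sc_zero_right [simp]: "sc c 0 = 0"
  using sc_add_right[of c 0 0] by simp

lemma sc_zero_left [simp]: "sc 0 u = 0"
  using sc_add_left[of 0 0 u] by simp

lemma sc_minus_left: "sc (- c) u = - sc c u"
  by (rule minus_unique[symmetric]) (simp flip: sc_add_left)

lemma sc_sum_right: "sc c (\<Sum>i\<in>I. f i) = (\<Sum>i\<in>I. sc c (f i))"
  by (induction I rule: infinite_finite_induct) (auto simp: sc_add_right)

lemma sc_eq_0_iff [simp]: "c \<noteq> 0 \<Longrightarrow> sc c u = 0 \<longleftrightarrow> u = 0"
  by (metis sc_sc sc_one sc_zero_right left_inverse)

lemma subalg_one: "subalg sc X \<Longrightarrow> 1 \<in> X"
  and subalg_add: "subalg sc X \<Longrightarrow> u \<in> X \<Longrightarrow> v \<in> X \<Longrightarrow> u + v \<in> X"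
  and subalg_mult: "subalg sc X \<Longrightarrow> u \<in> X \<Longrightarrow> v \<in> X \<Longrightarrow> u * v \<in> X"
  and subalg_sc: "subalg sc X \<Longrightarrow> u \<in> X \<Longrightarrow> sc c u \<in> X"
  by (simp_all add: subalg_def)

lemma subalg_zero: "subalg sc X \<Longrightarrow> 0 \<in> X"
  using subalg_sc[of X 1 0] subalg_one[of X] by (metis sc_zero_left)

lemma subalg_diff: "subalg sc X \<Longrightarrow> u \<in> X \<Longrightarrow> v \<in> X \<Longrightarrow> u - v \<in> X"
  using subalg_add subalg_sc[of X v "- 1"] by (metis diff_conv_add_uminus sc_minus_left sc_one)

lemma subalg_sum: "subalg sc X \<Longrightarrow> (\<And>i. i \<in> I \<Longrightarrow> f i \<in> X) \<Longrightarrow> (\<Sum>i\<in>I. f i) \<in> X"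
  by (induction I rule: infinite_finite_induct) (auto intro: subalg_zero subalg_add)

lemma subalg_cent: "subalg sc R \<Longrightarrow> subalg sc (cent R X)"
  unfolding subalg_def cent_def by (auto simp: algebra_simps) (metis mult.assoc)

lemma centI: "r \<in> R \<Longrightarrow> (\<And>x. x \<in> X \<Longrightarrow> r * x = x * r) \<Longrightarrow> r \<in> cent R X"
  and centD: "r \<in> cent R X \<Longrightarrow> x \<in> X \<Longrightarrow> r * x = x * r"
  and cent_subset: "cent R X \<subseteq> R"
  by (auto simp: cent_def)

lemma cent_mono: "R \<subseteq> R' \<Longrightarrow> X' \<subseteq> X \<Longrightarrow> cent R X \<subseteq> cent R' X'"
  by (auto simp: cent_def)

lemma scalars_subset_cent: "subalg sc R \<Longrightarrow> scalars sc \<subseteq> cent R X"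
  by (auto simp: scalars_def cent_def intro: subalg_sc subalg_one)

definition scalar_coeff :: "'a \<Rightarrow> 'k" where
  "scalar_coeff z = (SOME c. sc c 1 = z)"

lemma sc_scalar_coeff: "z \<in> scalars sc \<Longrightarrow> sc (scalar_coeff z) 1 = z"
  unfolding scalar_coeff_def scalars_def by (rule someI_ex) auto

lemma mult_scalar:
  "z \<in> scalars sc \<Longrightarrow> u * z = sc (scalar_coeff z) u"
  "z \<in> scalars sc \<Longrightarrow> z * u = sc (scalar_coeff z) u"
  by (metis sc_scalar_coeff mult_sc_right mult_1_right, metis sc_scalar_coeff mult_sc_left mult_1_left)

end

definition k_linear_on :: "('k::field \<Rightarrow> 'a::ring_1 \<Rightarrow> 'a) \<Rightarrow> 'a set \<Rightarrow> ('a \<Rightarrow> 'a) \<Rightarrow> bool" where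
  "k_linear_on sc X g \<longleftrightarrow>
     (\<forall>u\<in>X. \<forall>v\<in>X. g (u + v) = g u + g v) \<and> (\<forall>c. \<forall>u\<in>X. g (sc c u) = sc c (g u))"

definition k_bilinear ::
  "('k::field \<Rightarrow> 'a::ring_1 \<Rightarrow> 'a) \<Rightarrow> 'a set \<Rightarrow> 'a set \<Rightarrow> ('a \<Rightarrow> 'a \<Rightarrow> 'a) \<Rightarrow> bool" where
  "k_bilinear sc A B phi \<longleftrightarrow>
     (\<forall>b\<in>B. k_linear_on sc A (\<lambda>a. phi a b)) \<and> (\<forall>a\<in>A. k_linear_on sc B (phi a))"

context k_alg
begin

lemma k_linear_on_zero:
  assumes "subalg sc X" "k_linear_on sc X g"
  shows "g 0 = 0"
proof -
  have "g (0 + 0) = g 0 + g 0"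
    using assms subalg_zero unfolding k_linear_on_def by blast
  then show ?thesis by simp
qed

lemma k_linear_on_lincomb:
  assumes X: "subalg sc X" and g: "k_linear_on sc X g" and h: "\<And>i. i \<in> I \<Longrightarrow> h i \<in> X"
  shows "g (\<Sum>i\<in>I. sc (k i) (h i)) = (\<Sum>i\<in>I. sc (k i) (g (h i)))"
  using h
proof (induction I rule: infinite_finite_induct)
  case (insert i I)
  have "(\<Sum>i\<in>I. sc (k i) (h i)) \<in> X"
    using insert.prems by (intro subalg_sum[OF X] subalg_sc[OF X]) auto
  then show ?case
    using insert g subalg_sc[OF X] unfolding k_linear_on_def by simp
qed (simp_all add: k_linear_on_zero[OF X g])

lemma k_linear_on_mult_left: "k_linear_on sc X (\<lambda>z. w * z)"
  and k_linear_on_mult_right: "k_linear_on sc X (\<lambda>z. z * w)"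
  and k_linear_on_id: "k_linear_on sc X (\<lambda>z. z)"
  unfolding k_linear_on_def by (simp_all add: distrib_left distrib_right)

lemma k_linear_on_comp:
  "k_linear_on sc Y F \<Longrightarrow> k_linear_on sc X h \<Longrightarrow> (\<And>z. z \<in> X \<Longrightarrow> h z \<in> Y) \<Longrightarrow>
    k_linear_on sc X (\<lambda>z. F (h z))"
  unfolding k_linear_on_def by simp

lemma k_linear_on_sum:
  "(\<And>i. i \<in> I \<Longrightarrow> k_linear_on sc X (F i)) \<Longrightarrow> k_linear_on sc X (\<lambda>z. \<Sum>i\<in>I. F i z)"
  unfolding k_linear_on_def by (simp add: sum.distrib sc_sum_right)

lemma k_bilinear_mult: "k_bilinear sc A B (\<lambda>a b. a * b)"
  and k_bilinear_mult_swap: "k_bilinear sc A B (\<lambda>a b. b * a)"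
  unfolding k_bilinear_def k_linear_on_def by (simp_all add: distrib_left distrib_right)

end

section \<open>Finite formal sums and tensor relations\<close>

lemma fspanI: "finite t \<Longrightarrow> t \<subseteq> G \<Longrightarrow> f = (\<lambda>p. \<Sum>h\<in>t. r h * h p) \<Longrightarrow> f \<in> fspan G"
  unfolding fspan_def by blast

lemma fspanE:
  assumes "f \<in> fspan G"
  obtains t r where "finite t" "t \<subseteq> G" "f = (\<lambda>p. \<Sum>h\<in>t. r h * h p)"
  using assms unfolding fspan_def by blast

lemma fspan_gen: "g \<in> G \<Longrightarrow> g \<in> fspan G"
  by (rule fspanI[of "{g}" _ _ "\<lambda>_. 1"]) auto

lemma fspan_zero: "(\<lambda>_. 0) \<in> fspan G"
  by (rule fspanI[of "{}"]) auto

lemma fspan_cong: "f \<in> fspan G \<Longrightarrow> (\<And>p. f p = g p) \<Longrightarrow> g \<in> fspan G"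
  by (metis ext)

lemma fspan_add:
  assumes "f \<in> fspan G" "g \<in> fspan G"
  shows "(\<lambda>p. f p + g p) \<in> fspan G"
proof -
  obtain t r where t: "finite t" "t \<subseteq> G" "f = (\<lambda>p. \<Sum>h\<in>t. r h * h p)"
    using assms(1) by (rule fspanE)
  obtain t' r' where t': "finite t'" "t' \<subseteq> G" "g = (\<lambda>p. \<Sum>h\<in>t'. r' h * h p)"
    using assms(2) by (rule fspanE)
  have extend: "(\<Sum>h\<in>t \<union> t'. (if h \<in> s then rs h else 0) * h p) = (\<Sum>h\<in>s. rs h * h p)"
    if "s \<subseteq> t \<union> t'" for s rs p
    by (rule sum.mono_neutral_cong_right) (use t(1) t'(1) that in auto)
  show ?thesis
  proof (rule fspanI[of "t \<union> t'"])
    show "(\<lambda>p. f p + g p) =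
        (\<lambda>p. \<Sum>h\<in>t \<union> t'. ((if h \<in> t then r h else 0) + (if h \<in> t' then r' h else 0)) * h p)"
      by (simp only: distrib_right sum.distrib extend Un_upper1 Un_upper2 t(3) t'(3))
  qed (use t t' in auto)
qed

lemma fspan_smult: "f \<in> fspan G \<Longrightarrow> (\<lambda>p. c * f p) \<in> fspan G"
  by (erule fspanE, rule fspanI[where r = "\<lambda>h. c * _ h"]) (auto simp: sum_distrib_left mult.assoc)

lemma fspan_diff: "f \<in> fspan G \<Longrightarrow> g \<in> fspan G \<Longrightarrow> (\<lambda>p. f p - g p) \<in> fspan G"
  using fspan_add[of f G "\<lambda>p. - 1 * g p"] fspan_smult[of g G "- 1"] by simp

lemma fspan_sum:
  "finite I \<Longrightarrow> (\<And>i. i \<in> I \<Longrightarrow> F i \<in> fspan G) \<Longrightarrow> (\<lambda>p. \<Sum>i\<in>I. F i p) \<in> fspan G"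
  by (induction I rule: finite_induct) (auto simp: fspan_zero intro: fspan_add)

lemma fspan_compose:
  assumes "f \<in> fspan G" and "\<And>g. g \<in> G \<Longrightarrow> (\<lambda>p. g (h p)) \<in> fspan H"
  shows "(\<lambda>p. f (h p)) \<in> fspan H"
proof -
  obtain t r where t: "finite t" "t \<subseteq> G" "f = (\<lambda>p. \<Sum>g\<in>t. r g * g p)"
    using assms(1) by (rule fspanE)
  show ?thesis
    unfolding t(3) using t(1,2) assms(2) by (intro fspan_sum fspan_smult) auto
qed

lemma finite_supp_ind: "finite {p. (ind u p :: 'k::zero_neq_one) \<noteq> 0}"
  by (rule finite_subset[of _ "{u}"]) (auto simp: ind_def)

lemma finite_supp_add:
  "finite {p. f p \<noteq> 0} \<Longrightarrow> finite {p. g p \<noteq> 0} \<Longrightarrow> finite {p. f p + g p \<noteq> (0::'k::comm_monoid_add)}"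
  by (rule finite_subset[of _ "{p. f p \<noteq> 0} \<union> {p. g p \<noteq> 0}"]) auto

lemma finite_supp_smult: "finite {p. f p \<noteq> 0} \<Longrightarrow> finite {p. c * f p \<noteq> (0::'k::mult_zero)}"
  by (rule finite_subset[of _ "{p. f p \<noteq> 0}"]) auto

lemma finite_supp_diff:
  "finite {p. f p \<noteq> 0} \<Longrightarrow> finite {p. g p \<noteq> 0} \<Longrightarrow> finite {p. f p - g p \<noteq> (0::'k::ab_group_add)}"
  by (rule finite_subset[of _ "{p. f p \<noteq> 0} \<union> {p. g p \<noteq> 0}"]) auto

lemma finite_supp_sum:
  "finite I \<Longrightarrow> (\<And>i. i \<in> I \<Longrightarrow> finite {p. F i p \<noteq> 0}) \<Longrightarrow>
    finite {p. (\<Sum>i\<in>I. F i p) \<noteq> (0::'k::comm_monoid_add)}"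
  by (induction I rule: finite_induct) (auto intro: finite_supp_add)

lemma supp_sum_ind_subset: "{p. (\<Sum>i\<in>I. ind (u i) p :: 'k::semiring_1) \<noteq> 0} \<subseteq> u ` I"
proof
  fix p assume "p \<in> {p. (\<Sum>i\<in>I. ind (u i) p :: 'k) \<noteq> 0}"
  then obtain i where "i \<in> I" "(ind (u i) p :: 'k) \<noteq> 0"
    by (auto intro: sum.not_neutral_contains_not_neutral)
  then show "p \<in> u ` I"
    by (auto simp: ind_def split: if_splits)
qed

lemma ind_expansion:
  fixes f :: "'x \<Rightarrow> 'k::comm_ring_1"
  assumes "finite {p. f p \<noteq> 0}"
  shows "f x = (\<Sum>p\<in>{p. f p \<noteq> 0}. f p * ind p x)"
proof -
  have "(\<Sum>p\<in>{p. f p \<noteq> 0}. f p * ind p x) = (\<Sum>p\<in>{p. f p \<noteq> 0}. if x = p then f p else 0)"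
    by (rule sum.cong) (auto simp: ind_def)
  then show ?thesis
    using assms by simp
qed

lemma ind_swap: "ind u (prod.swap p) = ind (prod.swap u) p"
  by (auto simp: ind_def)

lemma supp_swap: "{p. f (prod.swap p) \<noteq> 0} = prod.swap ` {p. f p \<noteq> 0}"
  by (auto simp: image_iff)

lemma fin_supp_on_swap: "fin_supp_on (\<lambda>p. f (prod.swap p)) (A \<times> B) \<longleftrightarrow> fin_supp_on f (B \<times> A)"
  unfolding fin_supp_on_def supp_swap by (auto simp: finite_image_iff)

context k_alg
begin

lemma tsum_superset:
  "finite T \<Longrightarrow> {p. f p \<noteq> 0} \<subseteq> T \<Longrightarrow> tsum sc phi f = (\<Sum>p\<in>T. sc (f p) (phi (fst p) (snd p)))"
  unfolding tsum_def by (rule sum.mono_neutral_left) auto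

lemma tsum_add:
  assumes "finite {p. f p \<noteq> 0}" "finite {p. g p \<noteq> 0}"
  shows "tsum sc phi (\<lambda>p. f p + g p) = tsum sc phi f + tsum sc phi g"
proof -
  let ?T = "{p. f p \<noteq> 0} \<union> {p. g p \<noteq> 0}"
  have "finite ?T" using assms by simp
  then show ?thesis
    by (subst (1 2 3) tsum_superset[where T = ?T]) (auto simp: sc_add_left sum.distrib)
qed

lemma tsum_smult: "finite {p. f p \<noteq> 0} \<Longrightarrow> tsum sc phi (\<lambda>p. c * f p) = sc c (tsum sc phi f)"
  by (subst (1 2) tsum_superset[where T = "{p. f p \<noteq> 0}"]) (auto simp: sc_sum_right)

lemma tsum_diff:
  assumes "finite {p. f p \<noteq> 0}" "finite {p. g p \<noteq> 0}"
  shows "tsum sc phi (\<lambda>p. f p - g p) = tsum sc phi f - tsum sc phi g"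
  using tsum_add[OF assms(1) finite_supp_smult[OF assms(2)], of phi "- 1"]
    tsum_smult[OF assms(2), of phi "- 1"]
  by (simp add: sc_minus_left)

lemma tsum_ind [simp]: "tsum sc phi (ind u) = phi (fst u) (snd u)"
  by (subst tsum_superset[where T = "{u}"]) (auto simp: ind_def)

lemma tsum_sum:
  "finite I \<Longrightarrow> (\<And>i. i \<in> I \<Longrightarrow> finite {p. F i p \<noteq> 0}) \<Longrightarrow>
    tsum sc phi (\<lambda>p. \<Sum>i\<in>I. F i p) = (\<Sum>i\<in>I. tsum sc phi (F i))"
proof (induction I rule: finite_induct)
  case empty
  then show ?case by (simp add: tsum_def)
next
  case (insert i I)
  then show ?case
    using tsum_add[of "F i" "\<lambda>p. \<Sum>i\<in>I. F i p" phi] by (simp add: finite_supp_sum)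
qed

lemma tsum_fspan_eq_0:
  assumes "f \<in> fspan G" and "\<And>g. g \<in> G \<Longrightarrow> finite {p. g p \<noteq> 0} \<and> tsum sc phi g = 0"
  shows "tsum sc phi f = 0"
proof -
  obtain t r where t: "finite t" "t \<subseteq> G" "f = (\<lambda>p. \<Sum>g\<in>t. r g * g p)"
    using assms(1) by (rule fspanE)
  have "tsum sc phi (\<lambda>p. \<Sum>g\<in>t. r g * g p) = (\<Sum>g\<in>t. sc (r g) (tsum sc phi g))"
    using t(1,2) assms(2) by (simp add: tsum_sum tsum_smult finite_supp_smult subset_iff)
  also have "\<dots> = 0"
    using t(2) assms(2) by (intro sum.neutral) auto
  finally show ?thesis using t(3) by simp
qed

lemma tsum_swap: "tsum sc (\<lambda>b a. phi a b) f = tsum sc phi (\<lambda>p. f (prod.swap p))"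
  unfolding tsum_def supp_swap by (simp add: sum.reindex)

lemma tsum_in_subalg:
  "subalg sc C \<Longrightarrow> (\<And>a b. a \<in> A \<Longrightarrow> b \<in> B \<Longrightarrow> phi a b \<in> C) \<Longrightarrow> fin_supp_on f (A \<times> B) \<Longrightarrow>
    tsum sc phi f \<in> C"
  unfolding tsum_def fin_supp_on_def by (intro subalg_sum subalg_sc) auto

lemma tensor_rels_add_left:
  "a \<in> A \<Longrightarrow> a' \<in> A \<Longrightarrow> b \<in> B \<Longrightarrow>
    (\<lambda>p. ind (a + a', b) p - ind (a, b) p - ind (a', b) p) \<in> tensor_rels sc S A B"
  and tensor_rels_add_right:
  "a \<in> A \<Longrightarrow> b \<in> B \<Longrightarrow> b' \<in> B \<Longrightarrow>
    (\<lambda>p. ind (a, b + b') p - ind (a, b) p - ind (a, b') p) \<in> tensor_rels sc S A B"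
  and tensor_rels_sc_left:
  "a \<in> A \<Longrightarrow> b \<in> B \<Longrightarrow> (\<lambda>p. ind (sc c a, b) p - c * ind (a, b) p) \<in> tensor_rels sc S A B"
  and tensor_rels_sc_right:
  "a \<in> A \<Longrightarrow> b \<in> B \<Longrightarrow> (\<lambda>p. ind (a, sc c b) p - c * ind (a, b) p) \<in> tensor_rels sc S A B"
  unfolding tensor_rels_def by auto

lemma finite_supp_tensor_rels: "g \<in> tensor_rels sc S A B \<Longrightarrow> finite {p. g p \<noteq> 0}"
  unfolding tensor_rels_def
  by (elim UnE CollectE exE conjE) (simp_all only: finite_supp_diff finite_supp_smult finite_supp_ind)

lemma tsum_ind_diff3:
  "tsum sc phi (\<lambda>p. ind u p - ind v p - ind w p) =
    phi (fst u) (snd u) - phi (fst v) (snd v) - phi (fst w) (snd w)"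
  by (simp only: tsum_diff[OF finite_supp_diff[OF finite_supp_ind finite_supp_ind] finite_supp_ind]
      tsum_diff[OF finite_supp_ind finite_supp_ind] tsum_ind)

lemma tsum_ind_diff_smult:
  "tsum sc phi (\<lambda>p. ind u p - c * ind v p) = phi (fst u) (snd u) - sc c (phi (fst v) (snd v))"
  by (simp only: tsum_diff[OF finite_supp_ind finite_supp_smult[OF finite_supp_ind]]
      tsum_smult[OF finite_supp_ind] tsum_ind)

lemma tsum_tensor_rels_eq_0:
  assumes phi: "k_bilinear sc A B phi" and g: "g \<in> tensor_rels sc (scalars sc) A B"
  shows "tsum sc phi g = 0"
  using g unfolding tensor_rels_def
proof (elim UnE CollectE exE conjE)
  fix a s b
  assume "g = (\<lambda>p. ind (a * s, b) p - ind (a, s * b) p)" "a \<in> A" "s \<in> scalars sc" "b \<in> B"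
  then show ?thesis
    using phi unfolding k_bilinear_def k_linear_on_def scalars_def
    by (auto simp: tsum_ind_diff_smult[where c = 1, simplified])
qed (use phi in \<open>simp_all add: tsum_ind_diff3 tsum_ind_diff_smult k_bilinear_def k_linear_on_def\<close>)

lemma tensor_rels_swap:
  assumes "g \<in> tensor_rels sc (scalars sc) A B"
  shows "(\<lambda>p. g (prod.swap p)) \<in> fspan (tensor_rels sc (scalars sc) B A)"
  using assms unfolding tensor_rels_def[of sc "scalars sc" A B]
proof (elim UnE CollectE exE conjE)
  \<comment> \<open>over the scalars, balancing is the difference of two homogeneity relations\<close>
  fix a s b
  assume g: "g = (\<lambda>p. ind (a * s, b) p - ind (a, s * b) p)" and "s \<in> scalars sc" "a \<in> A" "b \<in> B"
  then obtain c where "s = sc c 1" "a \<in> A" "b \<in> B"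
    unfolding scalars_def by blast
  then have "(\<lambda>p. (ind (b, sc c a) p - c * ind (b, a) p) - (ind (sc c b, a) p - c * ind (b, a) p))
      \<in> fspan (tensor_rels sc (scalars sc) B A)"
    by (intro fspan_diff fspan_gen tensor_rels_sc_left tensor_rels_sc_right)
  then show ?thesis
    using \<open>s = sc c 1\<close> by (simp add: g ind_swap)
qed (auto simp: ind_swap intro!: fspan_gen tensor_rels_add_left tensor_rels_add_right
    tensor_rels_sc_left tensor_rels_sc_right)

lemma tensor_iso_swap:
  assumes iso: "tensor_iso sc (scalars sc) A B C phi"
  shows "tensor_iso sc (scalars sc) B A C (\<lambda>b a. phi a b)"
  unfolding tensor_iso_def
proof (intro conjI allI impI ballI)
  fix f :: "'a \<times> 'a \<Rightarrow> 'k"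
  assume "fin_supp_on f (B \<times> A)"
  then have "tsum sc phi (\<lambda>p. f (prod.swap p)) \<in> C"
    using iso fin_supp_on_swap[of f A B] unfolding tensor_iso_def by blast
  then show "tsum sc (\<lambda>b a. phi a b) f \<in> C"
    by (simp only: tsum_swap[of phi])
next
  fix g assume "g \<in> tensor_rels sc (scalars sc) B A"
  then have "(\<lambda>p. g (prod.swap p)) \<in> fspan (tensor_rels sc (scalars sc) A B)"
    by (rule tensor_rels_swap)
  then have "tsum sc phi (\<lambda>p. g (prod.swap p)) = 0"
    using iso unfolding tensor_iso_def by (intro tsum_fspan_eq_0) (auto intro: finite_supp_tensor_rels)
  then show "tsum sc (\<lambda>b a. phi a b) g = 0"
    by (simp only: tsum_swap[of phi])
next
  fix c assume "c \<in> C"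
  then obtain f where f: "fin_supp_on f (A \<times> B)" "c = tsum sc phi f"
    using iso unfolding tensor_iso_def by blast
  have "fin_supp_on (\<lambda>p. f (prod.swap p)) (B \<times> A)" "c = tsum sc (\<lambda>b a. phi a b) (\<lambda>p. f (prod.swap p))"
    using f fin_supp_on_swap[of f B A] by (simp_all add: tsum_swap[of phi])
  then show "\<exists>f. fin_supp_on f (B \<times> A) \<and> c = tsum sc (\<lambda>b a. phi a b) f"
    by blast
next
  fix f :: "'a \<times> 'a \<Rightarrow> 'k"
  assume "fin_supp_on f (B \<times> A)" "tsum sc (\<lambda>b a. phi a b) f = 0"
  then have "(\<lambda>p. f (prod.swap p)) \<in> fspan (tensor_rels sc (scalars sc) A B)"
    using iso fin_supp_on_swap[of f A B] unfolding tensor_iso_def tsum_swap[of phi] by blast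
  from fspan_compose[OF this, of prod.swap] tensor_rels_swap
  show "f \<in> fspan (tensor_rels sc (scalars sc) B A)"
    by simp
qed

section \<open>A coordinate criterion for tensor isomorphisms\<close>

lemma ind_zero_mod_fspan:
  assumes X: "subalg sc X"
    and add: "\<And>v w. v \<in> X \<Longrightarrow> w \<in> X \<Longrightarrow> (\<lambda>p. ind (j (v + w)) p - ind (j v) p - ind (j w) p) \<in> fspan G"
  shows "ind (j 0) \<in> fspan G"
proof -
  have "(\<lambda>p. - 1 * (ind (j (0 + 0)) p - ind (j 0) p - ind (j 0) p)) \<in> fspan G"
    using X by (intro fspan_smult add subalg_zero)
  then show ?thesis by simp
qed

lemma ind_lincomb_mod_fspan:
  assumes X: "subalg sc X" and Q: "finite Q" and u: "\<And>q. q \<in> Q \<Longrightarrow> u q \<in> X"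
    and add: "\<And>v w. v \<in> X \<Longrightarrow> w \<in> X \<Longrightarrow> (\<lambda>p. ind (j (v + w)) p - ind (j v) p - ind (j w) p) \<in> fspan G"
    and hom: "\<And>c v. v \<in> X \<Longrightarrow> (\<lambda>p. ind (j (sc c v)) p - c * ind (j v) p) \<in> fspan G"
  shows "(\<lambda>p. ind (j (\<Sum>q\<in>Q. sc (k q) (u q))) p - (\<Sum>q\<in>Q. k q * ind (j (u q)) p)) \<in> fspan G"
  using Q u
proof (induction Q rule: finite_induct)
  case empty
  then show ?case
    using ind_zero_mod_fspan[OF X add] by simp
next
  case (insert q Q)
  let ?v = "sc (k q) (u q)" and ?w = "\<Sum>q\<in>Q. sc (k q) (u q)"
  have "?v \<in> X" "?w \<in> X"
    using insert.prems by (auto intro!: subalg_sc[OF X] subalg_sum[OF X])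
  then have "(\<lambda>p. (ind (j (?v + ?w)) p - ind (j ?v) p - ind (j ?w) p) + (ind (j ?v) p - k q * ind (j (u q)) p)
      + (ind (j ?w) p - (\<Sum>q\<in>Q. k q * ind (j (u q)) p))) \<in> fspan G"
    using insert by (intro fspan_add add hom) auto
  then show ?case
    by (rule fspan_cong) (use insert.hyps in \<open>simp add: algebra_simps\<close>)
qed

lemma tensor_ind_lincomb_left:
  assumes "subalg sc A" "finite Q" "b \<in> B" "\<And>q. q \<in> Q \<Longrightarrow> u q \<in> A"
  shows "(\<lambda>p. ind (\<Sum>q\<in>Q. sc (k q) (u q), b) p - (\<Sum>q\<in>Q. k q * ind (u q, b) p))
    \<in> fspan (tensor_rels sc S A B)"
  using assms
  by (intro ind_lincomb_mod_fspan[where j = "\<lambda>a. (a, b)"] fspan_gen tensor_rels_add_left tensor_rels_sc_left)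

lemma tensor_ind_lincomb_right:
  assumes "subalg sc B" "finite Q" "a \<in> A" "\<And>q. q \<in> Q \<Longrightarrow> v q \<in> B"
  shows "(\<lambda>p. ind (a, \<Sum>q\<in>Q. sc (k q) (v q)) p - (\<Sum>q\<in>Q. k q * ind (a, v q) p))
    \<in> fspan (tensor_rels sc S A B)"
  using assms
  by (intro ind_lincomb_mod_fspan[where j = "Pair a"] fspan_gen tensor_rels_add_right tensor_rels_sc_right)

lemma tensor_ind_zero_left: "subalg sc A \<Longrightarrow> b \<in> B \<Longrightarrow> ind (0, b) \<in> fspan (tensor_rels sc S A B)"
  by (intro ind_zero_mod_fspan[where j = "\<lambda>a. (a, b)"] fspan_gen tensor_rels_add_left)

definition left_coeff :: "('a \<times> 'a \<Rightarrow> 'k) \<Rightarrow> ('a \<Rightarrow> 'k) \<Rightarrow> 'a" where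
  "left_coeff f kap = (\<Sum>p\<in>{p. f p \<noteq> 0}. sc (f p * kap (snd p)) (fst p))"

lemma tensor_reduce_to_basis:
  assumes A: "subalg sc A" and B: "subalg sc B" and f: "fin_supp_on f (A \<times> B)"
    and Q: "finite Q" and psi: "\<And>q. q \<in> Q \<Longrightarrow> psi q \<in> B"
    and B_expand: "\<And>b. b \<in> B \<Longrightarrow> b = (\<Sum>q\<in>Q. sc (kap q b) (psi q))"
  shows "(\<lambda>x. f x - (\<Sum>q\<in>Q. ind (left_coeff f (kap q), psi q) x)) \<in> fspan (tensor_rels sc S A B)"
proof -
  define T where "T = {p. f p \<noteq> 0}"
  define Rel where "Rel = tensor_rels sc S A B"
  have T: "finite T" "T \<subseteq> A \<times> B"
    using f unfolding fin_supp_on_def T_def by auto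
  let ?part = "\<lambda>q x. \<Sum>p\<in>T. (f p * kap q (snd p)) * ind (fst p, psi q) x"
  have expand_right: "(\<lambda>x. f x - (\<Sum>q\<in>Q. ?part q x)) \<in> fspan Rel"
  proof -
    have "(\<lambda>x. \<Sum>p\<in>T. f p * (ind (fst p, \<Sum>q\<in>Q. sc (kap q (snd p)) (psi q)) x
        - (\<Sum>q\<in>Q. kap q (snd p) * ind (fst p, psi q) x))) \<in> fspan Rel"
      unfolding Rel_def using T by (intro fspan_sum fspan_smult tensor_ind_lincomb_right B Q psi) auto
    then show ?thesis
    proof (rule fspan_cong)
      fix x
      have "(\<Sum>p\<in>T. f p * ind (fst p, \<Sum>q\<in>Q. sc (kap q (snd p)) (psi q)) x) = (\<Sum>p\<in>T. f p * ind p x)"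
      proof (rule sum.cong)
        fix p assume "p \<in> T"
        then have "(\<Sum>q\<in>Q. sc (kap q (snd p)) (psi q)) = snd p"
          using T(2) B_expand[of "snd p"] by auto
        then show "f p * ind (fst p, \<Sum>q\<in>Q. sc (kap q (snd p)) (psi q)) x = f p * ind p x"
          by simp
      qed simp
      also have "\<dots> = f x"
        using T(1) unfolding T_def by (rule ind_expansion[symmetric])
      finally show "(\<Sum>p\<in>T. f p * (ind (fst p, \<Sum>q\<in>Q. sc (kap q (snd p)) (psi q)) x
          - (\<Sum>q\<in>Q. kap q (snd p) * ind (fst p, psi q) x))) = f x - (\<Sum>q\<in>Q. ?part q x)"
        by (simp add: right_diff_distrib sum_subtractf sum_distrib_left mult.assoc sum.swap[of _ T Q])
    qed
  qed
  have collect_left: "(\<lambda>x. ?part q x - ind (left_coeff f (kap q), psi q) x) \<in> fspan Rel"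
    if q: "q \<in> Q" for q
  proof -
    have "(\<lambda>x. - 1 * (ind (left_coeff f (kap q), psi q) x - ?part q x)) \<in> fspan Rel"
      unfolding Rel_def left_coeff_def T_def[symmetric]
      using T q by (intro fspan_smult tensor_ind_lincomb_left A psi) auto
    then show ?thesis
      by (rule fspan_cong) simp
  qed
  have "(\<lambda>x. (f x - (\<Sum>q\<in>Q. ?part q x)) + (\<Sum>q\<in>Q. ?part q x - ind (left_coeff f (kap q), psi q) x))
      \<in> fspan Rel"
    by (intro fspan_add expand_right fspan_sum[OF Q] collect_left)
  then show ?thesis
    unfolding Rel_def by (rule fspan_cong) (simp add: sum_subtractf)
qed

lemma coordinate_tsum_eq_left_coeff:
  assumes C: "subalg sc C" and phi_in: "\<And>a b. a \<in> A \<Longrightarrow> b \<in> B \<Longrightarrow> phi a b \<in> C"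
    and g: "k_linear_on sc C g" and g_phi: "\<And>a b. a \<in> A \<Longrightarrow> b \<in> B \<Longrightarrow> g (phi a b) = sc (kap b) a"
    and f: "fin_supp_on f (A \<times> B)"
  shows "g (tsum sc phi f) = left_coeff f kap"
proof -
  have T: "{p. f p \<noteq> 0} \<subseteq> A \<times> B"
    using f unfolding fin_supp_on_def by blast
  have "g (tsum sc phi f) = (\<Sum>p\<in>{p. f p \<noteq> 0}. sc (f p) (g (phi (fst p) (snd p))))"
    unfolding tsum_def using T by (intro k_linear_on_lincomb[OF C g] phi_in) auto
  also have "\<dots> = left_coeff f kap"
    unfolding left_coeff_def using T by (intro sum.cong) (auto simp: g_phi mult.commute)
  finally show ?thesis .
qed

lemma tensor_iso_by_coordinates:
  assumes A: "subalg sc A" and B: "subalg sc B" and C: "subalg sc C"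
    and phi: "k_bilinear sc A B phi" and phi_in: "\<And>a b. a \<in> A \<Longrightarrow> b \<in> B \<Longrightarrow> phi a b \<in> C"
    and Q: "finite Q" and psi: "\<And>q. q \<in> Q \<Longrightarrow> psi q \<in> B"
    and B_expand: "\<And>b. b \<in> B \<Longrightarrow> b = (\<Sum>q\<in>Q. sc (kap q b) (psi q))"
    and C_expand: "\<And>c. c \<in> C \<Longrightarrow> c = (\<Sum>q\<in>Q. phi (g q c) (psi q))"
    and g_in: "\<And>q c. q \<in> Q \<Longrightarrow> c \<in> C \<Longrightarrow> g q c \<in> A"
    and g_linear: "\<And>q. q \<in> Q \<Longrightarrow> k_linear_on sc C (g q)"
    and g_phi: "\<And>q a b. q \<in> Q \<Longrightarrow> a \<in> A \<Longrightarrow> b \<in> B \<Longrightarrow> g q (phi a b) = sc (kap q b) a"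
  shows "tensor_iso sc (scalars sc) A B C phi"
  unfolding tensor_iso_def
proof (intro conjI allI impI ballI)
  fix f :: "'a \<times> 'a \<Rightarrow> 'k"
  assume "fin_supp_on f (A \<times> B)"
  with C phi_in show "tsum sc phi f \<in> C"
    by (rule tsum_in_subalg)
next
  fix h assume "h \<in> tensor_rels sc (scalars sc) A B"
  then show "tsum sc phi h = 0"
    by (rule tsum_tensor_rels_eq_0[OF phi])
next
  fix c assume c: "c \<in> C"
  let ?u = "\<lambda>q. (g q c, psi q)"
  let ?f = "\<lambda>p. \<Sum>q\<in>Q. ind (?u q) p :: 'k"
  have supp: "{p. ?f p \<noteq> 0} \<subseteq> ?u ` Q"
    by (rule supp_sum_ind_subset)
  have "fin_supp_on ?f (A \<times> B)"
    unfolding fin_supp_on_def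
  proof
    show "finite {p. ?f p \<noteq> 0}"
      using finite_subset[OF supp finite_imageI[OF Q]] .
    show "{p. ?f p \<noteq> 0} \<subseteq> A \<times> B"
      using supp by (rule order_trans) (use c g_in psi in auto)
  qed
  moreover have "tsum sc phi ?f = c"
    using C_expand[OF c, symmetric] by (simp add: tsum_sum[OF Q] finite_supp_ind)
  ultimately show "\<exists>f. fin_supp_on f (A \<times> B) \<and> c = tsum sc phi f"
    by (intro exI[of _ ?f]) simp
next
  fix f :: "'a \<times> 'a \<Rightarrow> 'k"
  assume f: "fin_supp_on f (A \<times> B)" and f0: "tsum sc phi f = 0"
  have "left_coeff f (kap q) = 0" if q: "q \<in> Q" for q
  proof -
    have "g q (tsum sc phi f) = left_coeff f (kap q)"
    proof (rule coordinate_tsum_eq_left_coeff[OF C phi_in g_linear[OF q] _ f])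
      fix a b assume "a \<in> A" "b \<in> B"
      then show "g q (phi a b) = sc (kap q b) a"
        by (rule g_phi[OF q])
    qed
    then show ?thesis
      using f0 k_linear_on_zero[OF C g_linear[OF q]] by simp
  qed
  then have "(\<lambda>x. (f x - (\<Sum>q\<in>Q. ind (left_coeff f (kap q), psi q) x))
      + (\<Sum>q\<in>Q. ind (left_coeff f (kap q), psi q) x)) \<in> fspan (tensor_rels sc (scalars sc) A B)"
    using psi by (intro fspan_add tensor_reduce_to_basis[OF A B f Q psi B_expand] fspan_sum[OF Q])
      (auto intro: tensor_ind_zero_left[OF A])
  then show "f \<in> fspan (tensor_rels sc (scalars sc) A B)"
    by (rule fspan_cong) simp
qed
end

section \<open>The basic construction\<close>

locale separable_ext = k_alg sc for sc :: "'k::field \<Rightarrow> 'a::ring_1 \<Rightarrow> 'a" +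
  fixes S R :: "'a set" and ES :: "'a \<Rightarrow> 'a" and lam :: 'k and n :: nat and x y :: "nat \<Rightarrow> 'a"
  assumes subalg_S: "subalg sc S" and subalg_R: "subalg sc R" and S_subset_R: "S \<subseteq> R"
    and separable: "strongly_separable sc S R ES lam n x y"
begin

lemma ES_in: "r \<in> R \<Longrightarrow> ES r \<in> S"
  and ES_add: "r \<in> R \<Longrightarrow> r' \<in> R \<Longrightarrow> ES (r + r') = ES r + ES r'"
  and ES_sc: "r \<in> R \<Longrightarrow> ES (sc c r) = sc c (ES r)"
  and ES_bimod: "s \<in> S \<Longrightarrow> r \<in> R \<Longrightarrow> s' \<in> S \<Longrightarrow> ES (s * r * s') = s * ES r * s'"
  and x_in: "i < n \<Longrightarrow> x i \<in> R"
  and y_in: "i < n \<Longrightarrow> y i \<in> R"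
  and dual_basis_left: "m \<in> R \<Longrightarrow> (\<Sum>i<n. ES (m * x i) * y i) = m"
  and dual_basis_right: "m \<in> R \<Longrightarrow> (\<Sum>i<n. x i * ES (y i * m)) = m"
  and ES_one: "ES 1 = 1"
  and lam_nonzero: "lam \<noteq> 0"
  and sum_x_y: "(\<Sum>i<n. x i * y i) = sc (inverse lam) 1"
  using separable unfolding strongly_separable_def bimod_map_def by blast+

lemma ES_mult_left: "s \<in> S \<Longrightarrow> r \<in> R \<Longrightarrow> ES (s * r) = s * ES r"
  using ES_bimod[of s r 1] subalg_one[OF subalg_S] by simp

lemma ES_mult_right: "r \<in> R \<Longrightarrow> s \<in> S \<Longrightarrow> ES (r * s) = ES r * s"
  using ES_bimod[of 1 r s] subalg_one[OF subalg_S] by simp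

lemma k_linear_on_ES: "k_linear_on sc R ES"
  unfolding k_linear_on_def by (simp add: ES_add ES_sc)

lemma ES_sum:
  assumes "\<And>i. i \<in> I \<Longrightarrow> h i \<in> R"
  shows "ES (\<Sum>i\<in>I. h i) = (\<Sum>i\<in>I. ES (h i))"
  using k_linear_on_lincomb[OF subalg_R k_linear_on_ES assms, where k = "\<lambda>_. 1"] by simp

lemma R_mult: "u \<in> R \<Longrightarrow> v \<in> R \<Longrightarrow> u * v \<in> R"
  by (rule subalg_mult[OF subalg_R])

lemma S_in_R: "s \<in> S \<Longrightarrow> s \<in> R"
  using S_subset_R by blast

lemma ES_cent: "z \<in> cent R T \<Longrightarrow> T \<subseteq> S \<Longrightarrow> ES z \<in> cent S T"
proof (rule centI)
  assume z: "z \<in> cent R T" and T: "T \<subseteq> S"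
  have zR: "z \<in> R"
    using z cent_subset by blast
  then show "ES z \<in> S"
    by (rule ES_in)
  fix t assume "t \<in> T"
  then have "t \<in> S" "z * t = t * z"
    using T centD[OF z] by auto
  then show "ES z * t = t * ES z"
    using ES_mult_left ES_mult_right zR by metis
qed

end

locale basic_construction_ext = separable_ext sc S R ES lam n x y
  for sc :: "'k::field \<Rightarrow> 'a::ring_1 \<Rightarrow> 'a" and S R ES lam n x y +
  fixes e :: 'a and R1 :: "'a set" and ER :: "'a \<Rightarrow> 'a"
  assumes basic: "basic_construction sc S R ES lam e R1 ER"
begin

lemma subalg_R1: "subalg sc R1"
  and R_subset_R1: "R \<subseteq> R1"
  and e_in: "e \<in> R1"
  and e_mult_e: "r \<in> R \<Longrightarrow> e * r * e = ES r * e"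
  and tensor_iso_R1: "tensor_iso sc S R R R1 (\<lambda>a b. a * e * b)"
  and ER_in: "z \<in> R1 \<Longrightarrow> ER z \<in> R"
  and ER_aeb: "a \<in> R \<Longrightarrow> b \<in> R \<Longrightarrow> ER (a * e * b) = sc lam (a * b)"
  and k_linear_on_ER: "k_linear_on sc R1 ER"
  using basic unfolding basic_construction_def k_linear_on_def by blast+

lemma R_in_R1: "r \<in> R \<Longrightarrow> r \<in> R1"
  using R_subset_R1 by blast

lemma R1_mult: "u \<in> R1 \<Longrightarrow> v \<in> R1 \<Longrightarrow> u * v \<in> R1"
  by (rule subalg_mult[OF subalg_R1])

lemma aeb_in: "a \<in> R \<Longrightarrow> b \<in> R \<Longrightarrow> a * e * b \<in> R1"
  by (intro R1_mult R_in_R1 e_in)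

lemma R1_induct [consumes 1, case_names zero add smult base]:
  assumes z: "z \<in> R1" and zero: "P 0"
    and add: "\<And>u v. u \<in> R1 \<Longrightarrow> v \<in> R1 \<Longrightarrow> P u \<Longrightarrow> P v \<Longrightarrow> P (u + v)"
    and smult: "\<And>c u. u \<in> R1 \<Longrightarrow> P u \<Longrightarrow> P (sc c u)"
    and base: "\<And>a b. a \<in> R \<Longrightarrow> b \<in> R \<Longrightarrow> P (a * e * b)"
  shows "P z"
proof -
  obtain f where f: "fin_supp_on f (R \<times> R)" "z = tsum sc (\<lambda>a b. a * e * b) f"
    using tensor_iso_R1 z unfolding tensor_iso_def by blast
  define T where "T = {p. f p \<noteq> 0}"
  have T: "finite T" "T \<subseteq> R \<times> R"
    using f(1) unfolding fin_supp_on_def T_def by auto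
  have "P (\<Sum>p\<in>T'. sc (f p) (fst p * e * snd p)) \<and> (\<Sum>p\<in>T'. sc (f p) (fst p * e * snd p)) \<in> R1"
    if "T' \<subseteq> T" for T'
    using finite_subset[OF that T(1)] that
  proof (induction T' rule: finite_induct)
    case (insert p T')
    then have "fst p \<in> R" "snd p \<in> R"
      using T(2) by auto
    then have "sc (f p) (fst p * e * snd p) \<in> R1" "P (sc (f p) (fst p * e * snd p))"
      by (auto intro: subalg_sc[OF subalg_R1] aeb_in smult base)
    then show ?case
      using insert by (auto intro: add subalg_add[OF subalg_R1])
  qed (simp add: zero subalg_zero[OF subalg_R1])
  then show ?thesis
    using f(2) unfolding tsum_def T_def by blast
qed

lemma R1_linear_eq:
  assumes z: "z \<in> R1" and F: "k_linear_on sc R1 F" and G: "k_linear_on sc R1 G"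
    and base: "\<And>a b. a \<in> R \<Longrightarrow> b \<in> R \<Longrightarrow> F (a * e * b) = G (a * e * b)"
  shows "F z = G z"
  using z
proof (induction rule: R1_induct)
  case zero
  then show ?case
    using k_linear_on_zero[OF subalg_R1 F] k_linear_on_zero[OF subalg_R1 G] by simp
next
  case (add u v)
  then show ?case
    using F G unfolding k_linear_on_def by simp
next
  case (smult c u)
  then show ?case
    using F G unfolding k_linear_on_def by simp
qed (rule base)

lemma ER_add: "z \<in> R1 \<Longrightarrow> w \<in> R1 \<Longrightarrow> ER (z + w) = ER z + ER w"
  and ER_sc: "z \<in> R1 \<Longrightarrow> ER (sc c z) = sc c (ER z)"
  using k_linear_on_ER unfolding k_linear_on_def by blast+

lemma ER_sum:
  assumes "\<And>i. i \<in> I \<Longrightarrow> h i \<in> R1"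
  shows "ER (\<Sum>i\<in>I. h i) = (\<Sum>i\<in>I. ER (h i))"
  using k_linear_on_lincomb[OF subalg_R1 k_linear_on_ER assms, where k = "\<lambda>_. 1"] by simp

lemma e_commute: "s \<in> S \<Longrightarrow> s * e = e * s"
proof -
  assume s: "s \<in> S"
  have "(\<lambda>p. ind (1 * s, 1) p - ind (1, s * 1) p) \<in> tensor_rels sc S R R"
    using s subalg_one[OF subalg_R] unfolding tensor_rels_def by blast
  then have "tsum sc (\<lambda>a b. a * e * b) (\<lambda>p. ind (1 * s, 1) p - 1 * ind (1, s * 1) p) = 0"
    using tensor_iso_R1 unfolding tensor_iso_def by simp
  then show ?thesis
    by (simp only: tsum_ind_diff_smult) simp
qed

lemma e_idem: "e * e = e"
  using e_mult_e[OF subalg_one[OF subalg_R]] ES_one by simp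

lemma sum_x_e_y: "(\<Sum>i<n. x i * e * y i) = 1"
proof -
  let ?u = "\<Sum>i<n. x i * e * y i"
  have "?u * z = z" if "z \<in> R1" for z
    using that k_linear_on_mult_left k_linear_on_id
  proof (rule R1_linear_eq)
    fix a b assume ab: "a \<in> R" "b \<in> R"
    have "?u * (a * e * b) = (\<Sum>i<n. x i * (e * (y i * a) * e) * b)"
      by (simp add: sum_distrib_right mult.assoc)
    also have "\<dots> = (\<Sum>i<n. x i * (ES (y i * a) * e) * b)"
      using ab y_in by (intro sum.cong refl) (simp add: e_mult_e R_mult)
    also have "\<dots> = (\<Sum>i<n. x i * ES (y i * a)) * e * b"
      by (simp add: sum_distrib_right mult.assoc)
    also have "\<dots> = a * e * b"
      using dual_basis_right[OF ab(1)] by simp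
    finally show "?u * (a * e * b) = a * e * b" .
  qed
  from this[OF subalg_one[OF subalg_R1]] show ?thesis
    by simp
qed

lemma ER_mult_left:
  assumes m: "m \<in> R" and z: "z \<in> R1"
  shows "ER (m * z) = m * ER z"
  using z
proof (rule R1_linear_eq)
  show "k_linear_on sc R1 (\<lambda>z. ER (m * z))"
    using m by (intro k_linear_on_comp[OF k_linear_on_ER k_linear_on_mult_left]) (auto intro: R1_mult R_in_R1)
  show "k_linear_on sc R1 (\<lambda>z. m * ER z)"
    by (intro k_linear_on_comp[OF k_linear_on_mult_left[where X = UNIV] k_linear_on_ER]) simp
  fix a b assume "a \<in> R" "b \<in> R"
  then show "ER (m * (a * e * b)) = m * ER (a * e * b)"
    using ER_aeb[of "m * a" b] ER_aeb[of a b] m by (simp add: R_mult mult.assoc)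
qed

lemma ER_mult_right:
  assumes z: "z \<in> R1" and m: "m \<in> R"
  shows "ER (z * m) = ER z * m"
  using z
proof (rule R1_linear_eq)
  show "k_linear_on sc R1 (\<lambda>z. ER (z * m))"
    using m by (intro k_linear_on_comp[OF k_linear_on_ER k_linear_on_mult_right]) (auto intro: R1_mult R_in_R1)
  show "k_linear_on sc R1 (\<lambda>z. ER z * m)"
    by (intro k_linear_on_comp[OF k_linear_on_mult_right[where X = UNIV] k_linear_on_ER]) simp
  fix a b assume "a \<in> R" "b \<in> R"
  then show "ER (a * e * b * m) = ER (a * e * b) * m"
    using ER_aeb[of a "b * m"] ER_aeb[of a b] m by (simp add: R_mult mult.assoc)
qed

lemma ER_one: "ER 1 = 1"
proof -
  have "ER 1 = ER (\<Sum>i<n. x i * e * y i)"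
    by (simp add: sum_x_e_y)
  also have "\<dots> = (\<Sum>i<n. ER (x i * e * y i))"
    by (rule ER_sum) (simp add: aeb_in x_in y_in)
  also have "\<dots> = sc lam (\<Sum>i<n. x i * y i)"
    using x_in y_in by (simp add: ER_aeb sc_sum_right)
  finally show ?thesis
    using lam_nonzero by (simp add: sum_x_y)
qed

text \<open>The dual bases \<open>\<lambda>\<^sup>-\<^sup>1 x\<^sub>i \<otimes> 1\<close> and \<open>1 \<otimes> y\<^sub>i\<close> of the basic construction,
  with \<open>a \<otimes> b\<close> realised as \<open>a * e * b\<close>.\<close>

definition x_e :: "nat \<Rightarrow> 'a" where
  "x_e i = sc (inverse lam) (x i * e)"

definition e_y :: "nat \<Rightarrow> 'a" where
  "e_y i = e * y i"

lemma x_e_in: "i < n \<Longrightarrow> x_e i \<in> R1"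
  and e_y_in: "i < n \<Longrightarrow> e_y i \<in> R1"
  unfolding x_e_def e_y_def using x_in y_in
  by (auto intro: subalg_sc[OF subalg_R1] R1_mult R_in_R1 e_in)

lemma ER_mult_e: "r \<in> R \<Longrightarrow> ER (r * e) = sc lam r"
  using ER_aeb[of r 1] subalg_one[OF subalg_R] by simp

lemma R_mult_e_eq_0_iff: "r \<in> R \<Longrightarrow> r * e = 0 \<longleftrightarrow> r = 0"
  using ER_mult_e[of r] lam_nonzero k_linear_on_zero[OF subalg_R1 k_linear_on_ER] by auto

lemma dual_basis_left_R1:
  assumes "m \<in> R1"
  shows "(\<Sum>i<n. ER (m * x_e i) * e_y i) = m"
  using assms
proof (rule R1_linear_eq)
  show "k_linear_on sc R1 (\<lambda>m. \<Sum>i<n. ER (m * x_e i) * e_y i)"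
    using x_e_in
    by (intro k_linear_on_sum k_linear_on_comp[OF k_linear_on_mult_right[where X = UNIV]]
        k_linear_on_comp[OF k_linear_on_ER k_linear_on_mult_right]) (auto intro: R1_mult)
  show "k_linear_on sc R1 (\<lambda>m. m)"
    by (rule k_linear_on_id)
  fix a b assume a: "a \<in> R" and b: "b \<in> R"
  have "ER (a * e * b * x_e i) * e_y i = a * e * (ES (b * x i) * y i)" if "i < n" for i
  proof -
    have bx: "b * x i \<in> R" and ES_bx: "ES (b * x i) \<in> R"
      using b x_in[OF that] ES_in S_in_R by (auto intro: R_mult)
    have "a * e * b * x_e i = sc (inverse lam) (a * ES (b * x i) * e)"
      using e_mult_e[OF bx] by (simp add: x_e_def mult.assoc)
    then have "ER (a * e * b * x_e i) = a * ES (b * x i)"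
      using a ES_bx lam_nonzero by (simp add: ER_sc ER_mult_e R_mult R1_mult R_in_R1 e_in)
    then have "ER (a * e * b * x_e i) * e_y i = a * (ES (b * x i) * e) * y i"
      by (simp add: e_y_def mult.assoc)
    also have "\<dots> = a * e * (ES (b * x i) * y i)"
      using e_commute[OF ES_in[OF bx]] by (simp add: mult.assoc)
    finally show ?thesis .
  qed
  then have "(\<Sum>i<n. ER (a * e * b * x_e i) * e_y i) = a * e * (\<Sum>i<n. ES (b * x i) * y i)"
    by (simp add: sum_distrib_left)
  also have "\<dots> = a * e * b"
    using dual_basis_left[OF b] by simp
  finally show "(\<Sum>i<n. ER (a * e * b * x_e i) * e_y i) = a * e * b" .
qed

lemma dual_basis_right_R1:
  assumes "m \<in> R1"
  shows "(\<Sum>i<n. x_e i * ER (e_y i * m)) = m"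
  using assms
proof (rule R1_linear_eq)
  show "k_linear_on sc R1 (\<lambda>m. \<Sum>i<n. x_e i * ER (e_y i * m))"
    using e_y_in
    by (intro k_linear_on_sum k_linear_on_comp[OF k_linear_on_mult_left[where X = UNIV]]
        k_linear_on_comp[OF k_linear_on_ER k_linear_on_mult_left]) (auto intro: R1_mult)
  show "k_linear_on sc R1 (\<lambda>m. m)"
    by (rule k_linear_on_id)
  fix a b assume a: "a \<in> R" and b: "b \<in> R"
  have "x_e i * ER (e_y i * (a * e * b)) = x i * ES (y i * a) * e * b" if "i < n" for i
  proof -
    have ya: "y i * a \<in> R" and ES_ya: "ES (y i * a) \<in> R"
      using a y_in[OF that] ES_in S_in_R by (auto intro: R_mult)
    have "e_y i * (a * e * b) = e * (y i * a) * e * b"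
      by (simp add: e_y_def mult.assoc)
    also have "\<dots> = ES (y i * a) * e * b"
      by (simp only: e_mult_e[OF ya])
    finally have "ER (e_y i * (a * e * b)) = sc lam (ES (y i * a) * b)"
      using ER_aeb[OF ES_ya b] by simp
    then have "x_e i * ER (e_y i * (a * e * b)) = x i * (e * ES (y i * a)) * b"
      using lam_nonzero by (simp add: x_e_def mult.assoc)
    also have "\<dots> = x i * ES (y i * a) * e * b"
      using e_commute[OF ES_in[OF ya]] by (simp add: mult.assoc)
    finally show ?thesis .
  qed
  then have "(\<Sum>i<n. x_e i * ER (e_y i * (a * e * b))) = (\<Sum>i<n. x i * ES (y i * a)) * e * b"
    by (simp add: sum_distrib_right)
  also have "\<dots> = a * e * b"
    using dual_basis_right[OF a] by simp
  finally show "(\<Sum>i<n. x_e i * ER (e_y i * (a * e * b))) = a * e * b" .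
qed

lemma strongly_separable_R1: "strongly_separable sc R R1 ER lam n x_e e_y"
  unfolding strongly_separable_def bimod_map_def
proof (intro conjI ballI allI impI)
  fix s r s' assume "s \<in> R" "r \<in> R1" "s' \<in> R"
  then show "ER (s * r * s') = s * ER r * s'"
    by (simp add: ER_mult_left ER_mult_right R1_mult R_in_R1)
next
  have "(\<Sum>i<n. x_e i * e_y i) = sc (inverse lam) (\<Sum>i<n. x i * (e * e) * y i)"
    by (simp add: x_e_def e_y_def sc_sum_right mult.assoc)
  then show "(\<Sum>i<n. x_e i * e_y i) = sc (inverse lam) 1"
    by (simp add: e_idem sum_x_e_y)
qed (simp_all add: ER_in ER_add ER_sc x_e_in e_y_in dual_basis_left_R1 dual_basis_right_R1
    ER_one lam_nonzero)

lemma R1_mult_e_in_R_mult_e: "z \<in> R1 \<Longrightarrow> \<exists>w\<in>R. z * e = w * e"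
proof (induction rule: R1_induct)
  case zero
  then show ?case
    using subalg_zero[OF subalg_R] by force
next
  case (add u v)
  then show ?case
    by (metis distrib_right subalg_add[OF subalg_R])
next
  case (smult c u)
  then show ?case
    by (metis mult_sc_left subalg_sc[OF subalg_R])
next
  case (base a b)
  then have "a * e * b * e = (a * ES b) * e" and "a * ES b \<in> R"
    using e_mult_e[of b] ES_in[of b] S_in_R by (auto simp: mult.assoc intro: R_mult)
  then show ?case
    by blast
qed

lemma cent_R1_eq_scalars:
  assumes irred: "cent R S = scalars sc"
  shows "cent R1 R = scalars sc"
proof
  show "scalars sc \<subseteq> cent R1 R"
    by (rule scalars_subset_cent[OF subalg_R1])
next
  show "cent R1 R \<subseteq> scalars sc"
  proof
    fix z assume z: "z \<in> cent R1 R"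
    then have zR1: "z \<in> R1"
      using cent_subset by blast
    obtain w where w: "w \<in> R" "z * e = w * e"
      using R1_mult_e_in_R_mult_e[OF zR1] by blast
    have "w \<in> cent R S"
    proof (rule centI[OF w(1)])
      fix s assume s: "s \<in> S"
      have "w * s * e = s * w * e"
        using e_commute[OF s] centD[OF z S_in_R[OF s]] w(2) by (metis mult.assoc)
      then have "(w * s - s * w) * e = 0"
        by (simp add: left_diff_distrib)
      then show "w * s = s * w"
        using w(1) s S_in_R by (simp add: R_mult_e_eq_0_iff subalg_diff[OF subalg_R] R_mult)
    qed
    then obtain c where c: "w = sc c 1"
      using irred unfolding scalars_def by auto
    have "z = (\<Sum>i<n. z * (x i * e * y i))"
      by (simp flip: sum_distrib_left add: sum_x_e_y)
    also have "\<dots> = (\<Sum>i<n. x i * (z * e) * y i)"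
      using centD[OF z x_in] by (intro sum.cong refl) (simp add: mult.assoc[symmetric])
    also have "\<dots> = sc c 1"
      by (simp add: w(2) c sc_sum_right[symmetric] sum_x_e_y)
    finally show "z \<in> scalars sc"
      unfolding scalars_def by simp
  qed
qed

end

section \<open>Coordinates over a finite right basis\<close>

locale right_free_ext = separable_ext sc S R ES lam n x y
  for sc :: "'k::field \<Rightarrow> 'a::ring_1 \<Rightarrow> 'a" and S R ES lam n x y +
  fixes Q T :: "'a set"
  assumes basis: "right_free_basis S R Q" and T_subset_S: "T \<subseteq> S" and Q_cent: "Q \<subseteq> cent R T"
begin

definition coord_fun :: "'a \<Rightarrow> ('a \<Rightarrow> 'a) \<Rightarrow> bool" where
  "coord_fun z h \<longleftrightarrow> (\<forall>q. h q \<in> S) \<and> (\<forall>q. q \<notin> Q \<longrightarrow> h q = 0) \<and> finite {q. h q \<noteq> 0} \<and>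
     z = (\<Sum>q\<in>{q. h q \<noteq> 0}. q * h q)"

definition coords :: "'a \<Rightarrow> 'a \<Rightarrow> 'a" where
  "coords z = (THE h. coord_fun z h)"

lemma ex1_coord_fun: "z \<in> R \<Longrightarrow> \<exists>!h. coord_fun z h"
  using basis unfolding right_free_basis_def coord_fun_def by blast

lemma coord_fun_coords: "z \<in> R \<Longrightarrow> coord_fun z (coords z)"
  unfolding coords_def by (rule theI'[OF ex1_coord_fun])

lemma coords_unique: "z \<in> R \<Longrightarrow> coord_fun z h \<Longrightarrow> coords z = h"
  using coord_fun_coords ex1_coord_fun by blast

lemma Q_subset_R: "Q \<subseteq> R"
  using basis unfolding right_free_basis_def by blast

lemma coords_in: "z \<in> R \<Longrightarrow> coords z q \<in> S"
  and coords_outside: "z \<in> R \<Longrightarrow> q \<notin> Q \<Longrightarrow> coords z q = 0"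
  and finite_supp_coords: "z \<in> R \<Longrightarrow> finite {q. coords z q \<noteq> 0}"
  using coord_fun_coords unfolding coord_fun_def by blast+

lemma coords_expand_superset:
  assumes z: "z \<in> R" and U: "finite U" "{q. coords z q \<noteq> 0} \<subseteq> U"
  shows "z = (\<Sum>q\<in>U. q * coords z q)"
proof -
  have "z = (\<Sum>q\<in>{q. coords z q \<noteq> 0}. q * coords z q)"
    using coord_fun_coords[OF z] unfolding coord_fun_def by blast
  also have "\<dots> = (\<Sum>q\<in>U. q * coords z q)"
    by (rule sum.mono_neutral_left) (use U in auto)
  finally show ?thesis .
qed

lemma coords_eqI_superset:
  assumes z: "z \<in> R" and h: "\<And>q. h q \<in> S" "\<And>q. q \<notin> Q \<Longrightarrow> h q = 0"
    and U: "finite U" "{q. h q \<noteq> 0} \<subseteq> U" and zU: "z = (\<Sum>q\<in>U. q * h q)"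
  shows "coords z = h"
proof (rule coords_unique[OF z])
  have "(\<Sum>q\<in>{q. h q \<noteq> 0}. q * h q) = (\<Sum>q\<in>U. q * h q)"
    by (rule sum.mono_neutral_left) (use U in auto)
  then show "coord_fun z h"
    unfolding coord_fun_def using h U finite_subset zU by auto
qed

lemma coords_lincomb:
  assumes J: "finite J" and z: "\<And>j. j \<in> J \<Longrightarrow> z j \<in> R" and r: "\<And>j. j \<in> J \<Longrightarrow> r j \<in> S"
  shows "coords (\<Sum>j\<in>J. z j * r j) = (\<lambda>q. \<Sum>j\<in>J. coords (z j) q * r j)"
proof (rule coords_eqI_superset)
  let ?U = "\<Union>j\<in>J. {q. coords (z j) q \<noteq> 0}"
  show "finite ?U"
    using J z finite_supp_coords by blast
  show "{q. (\<Sum>j\<in>J. coords (z j) q * r j) \<noteq> 0} \<subseteq> ?U"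
    by (force dest: sum.not_neutral_contains_not_neutral)
  have "(\<Sum>j\<in>J. z j * r j) = (\<Sum>j\<in>J. (\<Sum>q\<in>?U. q * coords (z j) q) * r j)"
    using J z \<open>finite ?U\<close> by (intro sum.cong refl arg_cong2[where f = "(*)"] coords_expand_superset) auto
  also have "\<dots> = (\<Sum>q\<in>?U. q * (\<Sum>j\<in>J. coords (z j) q * r j))"
    by (simp add: sum_distrib_right sum_distrib_left mult.assoc sum.swap[of _ J])
  finally show "(\<Sum>j\<in>J. z j * r j) = (\<Sum>q\<in>?U. q * (\<Sum>j\<in>J. coords (z j) q * r j))" .
next
  show "(\<Sum>j\<in>J. z j * r j) \<in> R"
    using z r S_in_R by (auto intro!: subalg_sum[OF subalg_R] R_mult)
  show "(\<Sum>j\<in>J. coords (z j) q * r j) \<in> S" for q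
    using z r by (auto intro!: subalg_sum[OF subalg_S] subalg_mult[OF subalg_S] coords_in)
  show "(\<Sum>j\<in>J. coords (z j) q * r j) = 0" if "q \<notin> Q" for q
    using z that by (simp add: coords_outside)
qed

lemma finite_Q: "finite Q"
proof (rule finite_subset)
  show "finite (\<Union>i<n. {q. coords (x i) q \<noteq> 0})"
    using x_in finite_supp_coords by blast
  show "Q \<subseteq> (\<Union>i<n. {q. coords (x i) q \<noteq> 0})"
  proof
    fix q0 assume q0: "q0 \<in> Q"
    then have q0R: "q0 \<in> R"
      using Q_subset_R by blast
    have delta: "coords q0 = (\<lambda>q. if q = q0 then 1 else 0)"
      using q0 subalg_one[OF subalg_S] subalg_zero[OF subalg_S]
      by (intro coords_eqI_superset[OF q0R, where U = "{q0}"]) auto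
    have "coords q0 = coords (\<Sum>i<n. x i * ES (y i * q0))"
      using dual_basis_right[OF q0R] by simp
    also have "\<dots> = (\<lambda>q. \<Sum>i<n. coords (x i) q * ES (y i * q0))"
      by (rule coords_lincomb) (auto simp: x_in y_in ES_in R_mult q0R)
    finally have "(\<Sum>i<n. coords (x i) q0 * ES (y i * q0)) \<noteq> 0"
      using fun_cong[OF delta, of q0] by simp
    then obtain i where "i \<in> {..<n}" "coords (x i) q0 * ES (y i * q0) \<noteq> 0"
      by (rule sum.not_neutral_contains_not_neutral)
    then show "q0 \<in> (\<Union>i<n. {q. coords (x i) q \<noteq> 0})"
      by (metis (mono_tags, lifting) UN_iff mem_Collect_eq mult_zero_left)
  qed
qed

lemma coords_expand: "z \<in> R \<Longrightarrow> z = (\<Sum>q\<in>Q. q * coords z q)"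
  using coords_expand_superset[OF _ finite_Q] coords_outside by blast

lemma coords_eqI:
  assumes "z \<in> R" "\<And>q. h q \<in> S" "\<And>q. q \<notin> Q \<Longrightarrow> h q = 0" "z = (\<Sum>q\<in>Q. q * h q)"
  shows "coords z = h"
  by (rule coords_eqI_superset[OF assms(1-3) finite_Q _ assms(4)]) (use assms(3) in auto)

lemma k_linear_on_coords: "k_linear_on sc R (\<lambda>z. coords z q)"
proof -
  have "coords (u + v) = (\<lambda>q. coords u q + coords v q)" if "u \<in> R" "v \<in> R" for u v
    using that coords_expand[of u] coords_expand[of v]
    by (intro coords_eqI) (auto simp: coords_in coords_outside subalg_add[OF subalg_R]
        subalg_add[OF subalg_S] distrib_left sum.distrib)
  moreover have "coords (sc c u) = (\<lambda>q. sc c (coords u q))" if "u \<in> R" for c u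
  proof (rule coords_eqI)
    show "sc c u = (\<Sum>q\<in>Q. q * sc c (coords u q))"
      by (subst (1) coords_expand[OF that]) (simp add: sc_sum_right)
  qed (use that in \<open>auto simp: coords_in coords_outside subalg_sc[OF subalg_R] subalg_sc[OF subalg_S]\<close>)
  ultimately show ?thesis
    unfolding k_linear_on_def by simp
qed

lemma coords_mult_right: "z \<in> R \<Longrightarrow> s \<in> S \<Longrightarrow> coords (z * s) q = coords z q * s"
proof -
  assume z: "z \<in> R" and s: "s \<in> S"
  have "coords (z * s) = (\<lambda>q. coords z q * s)"
  proof (rule coords_eqI)
    show "z * s = (\<Sum>q\<in>Q. q * (coords z q * s))"
      by (subst coords_expand[OF z]) (simp add: sum_distrib_right mult.assoc)
  qed (use z s S_in_R in \<open>auto simp: coords_in coords_outside R_mult subalg_mult[OF subalg_S]\<close>)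
  then show ?thesis
    by simp
qed

lemma coords_mult_left: "z \<in> R \<Longrightarrow> t \<in> T \<Longrightarrow> coords (t * z) q = t * coords z q"
proof -
  assume z: "z \<in> R" and t: "t \<in> T"
  then have tS: "t \<in> S"
    using T_subset_S by blast
  have "t * z = (\<Sum>q\<in>Q. (t * q) * coords z q)"
    by (subst coords_expand[OF z]) (simp add: sum_distrib_left mult.assoc)
  also have "\<dots> = (\<Sum>q\<in>Q. q * (t * coords z q))"
    using Q_cent t by (intro sum.cong refl) (metis centD mult.assoc subsetD)
  finally have expand: "t * z = (\<Sum>q\<in>Q. q * (t * coords z q))" .
  have "coords (t * z) = (\<lambda>q. t * coords z q)"
    by (rule coords_eqI[OF _ _ _ expand])
      (use z tS S_in_R in \<open>auto simp: coords_in coords_outside R_mult subalg_mult[OF subalg_S]\<close>)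
  then show ?thesis
    by simp
qed

lemma coords_cent: "z \<in> cent R T' \<Longrightarrow> T' \<subseteq> T \<Longrightarrow> coords z q \<in> cent S T'"
proof (rule centI)
  assume z: "z \<in> cent R T'" and T': "T' \<subseteq> T"
  then have zR: "z \<in> R"
    using cent_subset by blast
  then show "coords z q \<in> S"
    by (rule coords_in)
  fix t assume "t \<in> T'"
  then have "t \<in> T" "t \<in> S" "z * t = t * z"
    using T' T_subset_S centD[OF z] by auto
  then show "coords z q * t = t * coords z q"
    using coords_mult_left[OF zR] coords_mult_right[OF zR] by metis
qed

definition left_dual :: "'a \<Rightarrow> 'a" where
  "left_dual q = (\<Sum>i<n. coords (x i) q * y i)"

lemma left_dual_in: "left_dual q \<in> R"
  unfolding left_dual_def using x_in y_in
  by (intro subalg_sum[OF subalg_R] R_mult) (auto intro: S_in_R coords_in)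

lemma expand_left_dual: "z \<in> R \<Longrightarrow> z = (\<Sum>q\<in>Q. ES (z * q) * left_dual q)"
proof -
  assume z: "z \<in> R"
  have "(\<Sum>q\<in>Q. ES (z * q) * left_dual q) = (\<Sum>i<n. (\<Sum>q\<in>Q. ES (z * q) * coords (x i) q) * y i)"
    unfolding left_dual_def by (simp add: sum_distrib_left sum_distrib_right mult.assoc sum.swap[of _ Q])
  also have "\<dots> = (\<Sum>i<n. ES (z * x i) * y i)"
  proof (intro sum.cong refl arg_cong2[where f = "(*)"])
    fix i assume "i \<in> {..<n}"
    then have xi: "x i \<in> R"
      using x_in by blast
    have "(\<Sum>q\<in>Q. ES (z * q) * coords (x i) q) = ES (\<Sum>q\<in>Q. z * q * coords (x i) q)"
      using z xi Q_subset_R coords_in S_in_R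
      by (subst ES_sum) (auto simp: ES_mult_right R_mult intro!: sum.cong)
    also have "\<dots> = ES (z * x i)"
      using coords_expand[OF xi, symmetric] by (simp add: sum_distrib_left[symmetric] mult.assoc)
    finally show "(\<Sum>q\<in>Q. ES (z * q) * coords (x i) q) = ES (z * x i)" .
  qed
  also have "\<dots> = z"
    by (rule dual_basis_left[OF z])
  finally show ?thesis
    by simp
qed

lemma left_dual_cent: "left_dual q \<in> cent R T"
proof (rule centI[OF left_dual_in])
  fix t assume t: "t \<in> T"
  then have tR: "t \<in> R"
    using T_subset_S S_in_R by blast
  have "left_dual q * t = (\<Sum>j<n. coords (x j) q * (y j * t))"
    unfolding left_dual_def by (simp add: sum_distrib_right mult.assoc)
  also have "\<dots> = (\<Sum>j<n. coords (x j) q * (\<Sum>i<n. ES (y j * t * x i) * y i))"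
    using y_in tR by (intro sum.cong refl) (simp add: dual_basis_left R_mult)
  also have "\<dots> = (\<Sum>j<n. \<Sum>i<n. coords (x j) q * ES (y j * (t * x i)) * y i)"
    by (simp add: sum_distrib_left mult.assoc)
  also have "\<dots> = (\<Sum>i<n. \<Sum>j<n. coords (x j) q * ES (y j * (t * x i)) * y i)"
    by (rule sum.swap)
  also have "\<dots> = (\<Sum>i<n. (\<Sum>j<n. coords (x j) q * ES (y j * (t * x i))) * y i)"
    by (simp add: sum_distrib_right)
  also have "\<dots> = (\<Sum>i<n. coords (t * x i) q * y i)"
  proof (intro sum.cong refl arg_cong2[where f = "(*)"])
    fix i assume "i \<in> {..<n}"
    then have txi: "t * x i \<in> R"
      using x_in tR by (simp add: R_mult)
    have "coords (t * x i) = coords (\<Sum>j<n. x j * ES (y j * (t * x i)))"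
      by (simp add: dual_basis_right[OF txi])
    also have "\<dots> = (\<lambda>q. \<Sum>j<n. coords (x j) q * ES (y j * (t * x i)))"
      using x_in y_in txi by (intro coords_lincomb) (auto simp: ES_in R_mult)
    finally show "(\<Sum>j<n. coords (x j) q * ES (y j * (t * x i))) = coords (t * x i) q"
      by simp
  qed
  also have "\<dots> = t * left_dual q"
    unfolding left_dual_def using x_in t by (simp add: coords_mult_left sum_distrib_left mult.assoc)
  finally show "left_dual q * t = t * left_dual q" .
qed

end

section \<open>The depth-two tower\<close>

locale depth_two_tower = k_alg sc for sc :: "'k::field \<Rightarrow> 'a::ring_1 \<Rightarrow> 'a" +
  fixes N M M1 M2 :: "'a set" and E EM EM1 :: "'a \<Rightarrow> 'a" and e1 e2 :: 'a and lam :: 'k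
    and n :: nat and x y :: "nat \<Rightarrow> 'a" and Q :: "'a set"
  assumes subalg_N: "subalg sc N" and subalg_M: "subalg sc M" and N_subset_M: "N \<subseteq> M"
    and irreducible: "cent M N = scalars sc"
    and separable: "strongly_separable sc N M E lam n x y"
    and basic1: "basic_construction sc N M E lam e1 M1 EM"
    and basic2: "basic_construction sc M M1 EM lam e2 M2 EM1"
    and Q_cent: "Q \<subseteq> cent M2 M" and Q_basis: "right_free_basis M1 M2 Q"

sublocale depth_two_tower \<subseteq> level1: basic_construction_ext sc N M E lam n x y e1 M1 EM
  by unfold_locales (fact subalg_N subalg_M N_subset_M separable basic1)+

sublocale depth_two_tower \<subseteq>
  level2: basic_construction_ext sc M M1 EM lam n level1.x_e level1.e_y e2 M2 EM1
  by unfold_locales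
    (fact subalg_M level1.subalg_R1 level1.R_subset_R1 level1.strongly_separable_R1 basic2)+

sublocale depth_two_tower \<subseteq> free: right_free_ext sc M1 M2 EM1 lam n level2.x_e level2.e_y Q M
  by unfold_locales
    (fact level1.subalg_R1 level2.subalg_R1 level2.R_subset_R1 level2.strongly_separable_R1 Q_basis
      level1.R_subset_R1 Q_cent)+

context depth_two_tower
begin

abbreviation A :: "'a set" where "A \<equiv> cent M1 N"
abbreviation B :: "'a set" where "B \<equiv> cent M2 M"
abbreviation C :: "'a set" where "C \<equiv> cent M2 N"

lemma cent_M1_M_eq_scalars: "cent M1 M = scalars sc"
  by (rule level1.cent_R1_eq_scalars[OF irreducible])

lemma subalg_A: "subalg sc A"
  and subalg_B: "subalg sc B"
  and subalg_C: "subalg sc C"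
  by (rule subalg_cent[OF level1.subalg_R1] subalg_cent[OF level2.subalg_R1])+

lemma A_subset_C: "A \<subseteq> C"
  and B_subset_C: "B \<subseteq> C"
  using level2.R_subset_R1 N_subset_M by (simp_all add: cent_mono)

lemma mult_in_C: "u \<in> A \<union> B \<Longrightarrow> v \<in> A \<union> B \<Longrightarrow> u * v \<in> C"
  using A_subset_C B_subset_C by (blast intro: subalg_mult[OF subalg_C])

lemma mult_Q_in_B: "b \<in> B \<Longrightarrow> q \<in> Q \<Longrightarrow> b * q \<in> B"
  using Q_cent by (blast intro: subalg_mult[OF subalg_B])

lemma mult_Q_in_C: "c \<in> C \<Longrightarrow> q \<in> Q \<Longrightarrow> c * q \<in> C"
  using Q_cent B_subset_C by (blast intro: subalg_mult[OF subalg_C])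

lemma EM1_mult_Q_in_scalars: "b \<in> B \<Longrightarrow> q \<in> Q \<Longrightarrow> EM1 (b * q) \<in> scalars sc"
  using free.ES_cent[OF mult_Q_in_B level1.R_subset_R1] cent_M1_M_eq_scalars by simp

lemma coords_in_scalars: "b \<in> B \<Longrightarrow> free.coords b q \<in> scalars sc"
  using free.coords_cent[of b M q] cent_M1_M_eq_scalars by simp

lemma tensor_iso_A_B: "tensor_iso sc (scalars sc) A B C (\<lambda>a b. a * b)"
proof (rule tensor_iso_by_coordinates[OF subalg_A subalg_B subalg_C k_bilinear_mult _ free.finite_Q,
      where psi = free.left_dual and g = "\<lambda>q c. EM1 (c * q)"
        and kap = "\<lambda>q b. scalar_coeff (EM1 (b * q))"])
  fix a b assume "a \<in> A" "b \<in> B"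
  then show "a * b \<in> C"
    by (simp add: mult_in_C)
next
  fix q
  show "free.left_dual q \<in> B"
    by (rule free.left_dual_cent)
next
  fix b assume b: "b \<in> B"
  have "b = (\<Sum>q\<in>Q. EM1 (b * q) * free.left_dual q)"
    using b cent_subset by (blast intro: free.expand_left_dual)
  also have "\<dots> = (\<Sum>q\<in>Q. sc (scalar_coeff (EM1 (b * q))) (free.left_dual q))"
    using EM1_mult_Q_in_scalars[OF b] by (intro sum.cong refl mult_scalar)
  finally show "b = (\<Sum>q\<in>Q. sc (scalar_coeff (EM1 (b * q))) (free.left_dual q))" .
next
  fix c assume "c \<in> C"
  then show "c = (\<Sum>q\<in>Q. EM1 (c * q) * free.left_dual q)"
    using cent_subset by (blast intro: free.expand_left_dual)
next
  fix q c assume "q \<in> Q" "c \<in> C"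
  then show "EM1 (c * q) \<in> A"
    using N_subset_M level1.R_subset_R1 by (intro free.ES_cent mult_Q_in_C) auto
next
  fix q assume "q \<in> Q"
  then show "k_linear_on sc C (\<lambda>c. EM1 (c * q))"
    using cent_subset
    by (intro k_linear_on_comp[OF free.k_linear_on_ES k_linear_on_mult_right]) (blast intro: mult_Q_in_C)
next
  fix q a b assume q: "q \<in> Q" and a: "a \<in> A" and b: "b \<in> B"
  have "EM1 (a * (b * q)) = a * EM1 (b * q)"
    using a b q cent_subset by (blast intro: free.ES_mult_left mult_Q_in_B)
  also have "\<dots> = sc (scalar_coeff (EM1 (b * q))) a"
    using EM1_mult_Q_in_scalars[OF b q] by (rule mult_scalar)
  finally show "EM1 (a * b * q) = sc (scalar_coeff (EM1 (b * q))) a"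
    by (simp add: mult.assoc)
qed

lemma tensor_iso_B_A: "tensor_iso sc (scalars sc) B A C (\<lambda>b a. b * a)"
proof -
  have "tensor_iso sc (scalars sc) A B C (\<lambda>a b. b * a)"
  proof (rule tensor_iso_by_coordinates[OF subalg_A subalg_B subalg_C k_bilinear_mult_swap _
        free.finite_Q, where psi = "\<lambda>q. q" and g = "\<lambda>q c. free.coords c q"
          and kap = "\<lambda>q b. scalar_coeff (free.coords b q)"])
    fix a b assume "a \<in> A" "b \<in> B"
    then show "b * a \<in> C"
      by (simp add: mult_in_C)
  next
    fix q assume "q \<in> Q"
    then show "q \<in> B"
      using Q_cent by blast
  next
    fix b assume b: "b \<in> B"
    have "b = (\<Sum>q\<in>Q. q * free.coords b q)"
      using b cent_subset by (blast intro: free.coords_expand)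
    also have "\<dots> = (\<Sum>q\<in>Q. sc (scalar_coeff (free.coords b q)) q)"
      using coords_in_scalars[OF b] by (intro sum.cong refl mult_scalar)
    finally show "b = (\<Sum>q\<in>Q. sc (scalar_coeff (free.coords b q)) q)" .
  next
    fix c assume "c \<in> C"
    then show "c = (\<Sum>q\<in>Q. q * free.coords c q)"
      using cent_subset by (blast intro: free.coords_expand)
  next
    fix q c assume "c \<in> C"
    then show "free.coords c q \<in> A"
      using N_subset_M by (rule free.coords_cent)
  next
    fix q
    show "k_linear_on sc C (\<lambda>c. free.coords c q)"
      using cent_subset by (intro k_linear_on_comp[OF free.k_linear_on_coords k_linear_on_id]) blast
  next
    fix q a b assume a: "a \<in> A" and b: "b \<in> B"
    have "free.coords (b * a) q = free.coords b q * a"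
      using a b cent_subset by (blast intro: free.coords_mult_right)
    also have "\<dots> = sc (scalar_coeff (free.coords b q)) a"
      using coords_in_scalars[OF b] by (rule mult_scalar)
    finally show "free.coords (b * a) q = sc (scalar_coeff (free.coords b q)) a" .
  qed
  from tensor_iso_swap[OF this] show ?thesis
    by simp
qed

end

theorem lemma3p4:
  fixes sc :: "'k::field \<Rightarrow> 'a::ring_1 \<Rightarrow> 'a"
    and N M M1 M2 :: "'a set"
    and E EM EM1 :: "'a \<Rightarrow> 'a"
    and e1 e2 :: 'a
    and lam :: 'k
    and n :: nat and x y :: "nat \<Rightarrow> 'a"
  assumes alg: "k_algebra sc"
    and subN: "subalg sc N" and subM: "subalg sc M" and NM: "N \<subseteq> M"
    and irred: "cent M N = scalars sc"
    and sep: "strongly_separable sc N M E lam n x y"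
    and bc1: "basic_construction sc N M E lam e1 M1 EM"
    and bc2: "basic_construction sc M M1 EM lam e2 M2 EM1"
    and depth2: "\<exists>P. P \<subseteq> cent M1 N \<and> right_free_basis M M1 P"
                "\<exists>Q. Q \<subseteq> cent M2 M \<and> right_free_basis M1 M2 Q"
  shows "tensor_iso sc (scalars sc) (cent M1 N) (cent M2 M) (cent M2 N) (\<lambda>a b. a * b) \<and>
         tensor_iso sc (scalars sc) (cent M2 M) (cent M1 N) (cent M2 N) (\<lambda>b a. b * a)"
proof -
  \<comment> \<open>only the second depth-two condition is needed\<close>
  obtain Q where "Q \<subseteq> cent M2 M" "right_free_basis M1 M2 Q"
    using depth2(2) by blast
  then interpret depth_two_tower sc N M M1 M2 E EM EM1 e1 e2 lam n x y Q
    using assms by unfold_locales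
  show ?thesis
    using tensor_iso_A_B tensor_iso_B_A by blast
qed

end
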